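(* Let $G$ be a saturated graph with $mp(G) = k$, and let $H$ be the graph obtained from $G$ by adding a new vertex $v$ adjacent to all vertices of $G$. Then $mp(H) = k+1$ and $H$ is saturated.
   Context: All graphs are finite and simple. A degree monotone path in a graph $G$ is a path $v_1v_2\ldots v_m$ such that $\deg(v_1)\le \cdots\le \deg(v_m)$ or $\deg(v_1)\ge \cdots\ge \deg(v_m)$; its length is its number of vertices. $mp(G)$ denotes the maximum length of a degree monotone path in $G$. A graph $G$ is saturated if $mp(G+e)>mp(G)$ for every pair $e$ of non-adjacent vertices of $G$, where $G+e$ is $G$ with the edge $e$ added. *)

theory Defs
  imports Main
begin

definition simple_graph :: "'a set \<Rightarrow> 'a set set \<Rightarrow> bool" where
  "simple_graph V E \<longleftrightarrow> finite V \<and>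
     (\<forall>e\<in>E. \<exists>u w. e = {u, w} \<and> u \<noteq> w \<and> u \<in> V \<and> w \<in> V)"

definition degree :: "'a set \<Rightarrow> 'a set set \<Rightarrow> 'a \<Rightarrow> nat" where
  "degree V E v = card {w \<in> V. {v, w} \<in> E}"

definition is_path :: "'a set \<Rightarrow> 'a set set \<Rightarrow> 'a list \<Rightarrow> bool" where
  "is_path V E xs \<longleftrightarrow> xs \<noteq> [] \<and> distinct xs \<and> set xs \<subseteq> V \<and>
     (\<forall>i. Suc i < length xs \<longrightarrow> {xs ! i, xs ! Suc i} \<in> E)"

definition degree_monotone_path :: "'a set \<Rightarrow> 'a set set \<Rightarrow> 'a list \<Rightarrow> bool" where
  "degree_monotone_path V E xs \<longleftrightarrow> is_path V E xs \<and>
     (sorted (map (degree V E) xs) \<or> sorted (rev (map (degree V E) xs)))"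

text \<open>Maximum number of vertices of a degree monotone path (0 for the empty graph).\<close>
definition mp :: "'a set \<Rightarrow> 'a set set \<Rightarrow> nat" where
  "mp V E = Sup (length ` {xs. degree_monotone_path V E xs})"

definition saturated :: "'a set \<Rightarrow> 'a set set \<Rightarrow> bool" where
  "saturated V E \<longleftrightarrow> (\<forall>u\<in>V. \<forall>w\<in>V. u \<noteq> w \<and> {u, w} \<notin> E \<longrightarrow>
      mp V (insert {u, w} E) > mp V E)"

definition add_universal_vertex :: "'a set \<Rightarrow> 'a set set \<Rightarrow> 'a \<Rightarrow> 'a set \<times> 'a set set" where
  "add_universal_vertex V E v = (insert v V, E \<union> {{v, u} | u. u \<in> V})"

end

theory Submission
  imports Defs
begin

text \<open>Adding a universal vertex \<open>v\<close> raises every old degree by one and gives \<open>v\<close> degree \<open>|V|\<close>,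
  which exceeds the new degree of no old vertex. Hence appending \<open>v\<close> to a longest nondecreasing path of
  \<open>G\<close> gives a path of \<open>H\<close>, so \<open>mp H \<ge> mp G + 1\<close>. Conversely, on a nondecreasing path of \<open>H\<close>
  through \<open>v\<close>, every vertex after \<open>v\<close> has degree \<open>|V|\<close> in \<open>H\<close>, i.e. is adjacent to all of \<open>G\<close>,
  so \<open>v\<close> can be cut out, giving \<open>mp H \<le> mp G + 1\<close>. Since adding an edge \<open>e\<close> of \<open>G\<close> commutes
  with adding \<open>v\<close>, \<open>mp (H + e) = mp (G + e) + 1 > mp G + 1 = mp H\<close>, so \<open>H\<close> is saturated.\<close>

lemma is_path_iff_successively:
  "is_path V E xs \<longleftrightarrow> xs \<noteq> [] \<and> distinct xs \<and> set xs \<subseteq> V \<and>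
     successively (\<lambda>a b. {a, b} \<in> E) xs"
  unfolding is_path_def successively_conv_nth by blast

lemma degree_monotone_path_rev:
  "degree_monotone_path V E xs \<Longrightarrow> degree_monotone_path V E (rev xs)"
  unfolding degree_monotone_path_def is_path_iff_successively
  by (auto simp: rev_map[symmetric] insert_commute)

lemma degree_monotone_path_nondecreasing:
  assumes "degree_monotone_path V E xs"
  obtains ys where "degree_monotone_path V E ys" "sorted (map (degree V E) ys)"
    "length ys = length xs"
proof -
  from assms have "sorted (map (degree V E) xs) \<or> sorted (map (degree V E) (rev xs))"
    unfolding degree_monotone_path_def by (simp add: rev_map)
  then show ?thesis using that assms degree_monotone_path_rev by (metis length_rev)
qed

lemma degree_monotone_path_length_le_card:
  assumes "finite V" "degree_monotone_path V E xs"
  shows "length xs \<le> card V"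
proof -
  have "distinct xs" "set xs \<subseteq> V"
    using assms(2) unfolding degree_monotone_path_def is_path_def by auto
  then show ?thesis using assms(1) by (metis card_mono distinct_card)
qed

lemma length_le_mp:
  assumes "finite V" "degree_monotone_path V E xs"
  shows "length xs \<le> mp V E"
proof -
  have "bdd_above (length ` {xs. degree_monotone_path V E xs})"
    using degree_monotone_path_length_le_card[OF assms(1)] by (auto simp: bdd_above_def)
  then show ?thesis unfolding mp_def using assms(2) by (auto intro: cSup_upper)
qed

lemma mp_le:
  assumes "\<And>xs. degree_monotone_path V E xs \<Longrightarrow> length xs \<le> m"
  shows "mp V E \<le> m"
proof (cases "{xs. degree_monotone_path V E xs} = {}")
  case True
  then have "length ` {xs. degree_monotone_path V E xs} = {}" by blast
  then show ?thesis unfolding mp_def by (metis Sup_nat_empty le0)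
next
  case False
  then show ?thesis unfolding mp_def using assms by (auto intro: cSup_least)
qed

lemma mp_attained:
  assumes "finite V" "mp V E \<noteq> 0"
  obtains xs where "degree_monotone_path V E xs" "length xs = mp V E"
proof -
  let ?L = "length ` {xs. degree_monotone_path V E xs}"
  have "?L \<noteq> {}" using assms(2) unfolding mp_def by (metis Sup_nat_empty)
  moreover have "finite ?L"
    by (rule finite_subset[of _ "{..card V}"])
      (use degree_monotone_path_length_le_card[OF assms(1)] in auto)
  ultimately have "Sup ?L \<in> ?L" by (simp add: Sup_nat_def)
  then show ?thesis using that unfolding mp_def by auto
qed

context
  fixes V :: "'a set" and E :: "'a set set" and v :: 'a
  assumes simple: "simple_graph V E" and v_new: "v \<notin> V"
begin

abbreviation "EH \<equiv> E \<union> {{v, u} | u. u \<in> V}"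

lemma finite_vertices: "finite V"
  using simple unfolding simple_graph_def by auto

lemma neighbours_subset: "u \<in> V \<Longrightarrow> {w \<in> V. {u, w} \<in> E} \<subseteq> V - {u}"
  using simple unfolding simple_graph_def by (fastforce simp: doubleton_eq_iff)

lemma degree_less_card:
  assumes u: "u \<in> V"
  shows "degree V E u < card V"
proof -
  have "degree V E u \<le> card (V - {u})"
    unfolding degree_def using neighbours_subset[OF u] finite_vertices by (simp add: card_mono)
  also have "\<dots> < card V" using card_Diff1_less[OF finite_vertices u] .
  finally show ?thesis .
qed

lemma adjacent_if_degree_maximal:
  assumes u: "u \<in> V" and max: "card V \<le> Suc (degree V E u)" and w: "w \<in> V" "w \<noteq> u"
  shows "{u, w} \<in> E"
proof -
  have "card (V - {u}) \<le> card {w \<in> V. {u, w} \<in> E}"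
    using max u finite_vertices unfolding degree_def by simp
  then have "{w \<in> V. {u, w} \<in> E} = V - {u}"
    using neighbours_subset[OF u] finite_vertices by (meson card_seteq finite_Diff)
  then show ?thesis using w by auto
qed

lemma edge_avoiding_universal: "{a, b} \<in> EH \<Longrightarrow> a \<noteq> v \<Longrightarrow> b \<noteq> v \<Longrightarrow> {a, b} \<in> E"
  by (auto simp: doubleton_eq_iff)

lemma degree_universal_old: "u \<in> V \<Longrightarrow> degree (insert v V) EH u = Suc (degree V E u)"
proof -
  assume u: "u \<in> V"
  have "{w \<in> insert v V. {u, w} \<in> EH} = insert v {w \<in> V. {u, w} \<in> E}"
    using u v_new by (auto simp: insert_commute doubleton_eq_iff)
  moreover have "finite {w \<in> V. {u, w} \<in> E}" using finite_vertices by auto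
  ultimately show ?thesis unfolding degree_def using v_new by simp
qed

lemma degree_universal_new: "degree (insert v V) EH v = card V"
proof -
  have "{v} \<notin> E" using simple unfolding simple_graph_def by (auto simp: doubleton_eq_iff)
  then have "{w \<in> insert v V. {v, w} \<in> EH} = V" using v_new by auto
  then show ?thesis unfolding degree_def by simp
qed

lemma sorted_degree_universal_iff:
  assumes "set xs \<subseteq> V"
  shows "sorted (map (degree (insert v V) EH) xs) \<longleftrightarrow> sorted (map (degree V E) xs)"
proof -
  have shift: "map (degree (insert v V) EH) xs = map (Suc \<circ> degree V E) xs"
    using assms degree_universal_old by auto
  show ?thesis unfolding shift by (simp add: sorted_map)
qed

lemma successively_avoiding_universal:
  assumes "successively (\<lambda>a b. {a, b} \<in> EH) xs" "v \<notin> set xs"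
  shows "successively (\<lambda>a b. {a, b} \<in> E) xs"
  using assms(1) by (rule successively_mono) (use assms(2) edge_avoiding_universal in blast)

lemma degree_monotone_path_avoiding_universal:
  assumes "degree_monotone_path (insert v V) EH xs" "v \<notin> set xs"
  shows "degree_monotone_path V E xs"
proof -
  have "set xs \<subseteq> V" "set (rev xs) \<subseteq> V"
    using assms unfolding degree_monotone_path_def is_path_def by auto
  then show ?thesis
    using assms successively_avoiding_universal sorted_degree_universal_iff
    unfolding degree_monotone_path_def is_path_iff_successively by (auto simp: rev_map)
qed

text \<open>The vertex after \<open>v\<close> has degree at least that of \<open>v\<close>, so it is adjacent to the vertex
  before \<open>v\<close>.\<close>
lemma degree_monotone_path_cut_universal:
  assumes path: "degree_monotone_path (insert v V) EH (ys @ v # zs)"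
    and sorted: "sorted (map (degree (insert v V) EH) (ys @ v # zs))"
    and nonempty: "ys @ zs \<noteq> []"
  shows "degree_monotone_path V E (ys @ zs)"
proof -
  have distinct: "distinct (ys @ zs)" "v \<notin> set ys" "v \<notin> set zs"
    and sub: "set (ys @ zs) \<subseteq> V"
    and edges: "successively (\<lambda>a b. {a, b} \<in> EH) ys"
      "successively (\<lambda>a b. {a, b} \<in> EH) zs"
    using path unfolding degree_monotone_path_def is_path_iff_successively
    by (auto simp: successively_append_iff successively_Cons)
  have junction: "{last ys, hd zs} \<in> E" if "ys \<noteq> []" "zs \<noteq> []"
  proof -
    have in_lists: "hd zs \<in> set zs" "last ys \<in> set ys" using that by auto
    then have "degree (insert v V) EH v \<le> degree (insert v V) EH (hd zs)"
      using sorted by (simp add: sorted_append)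
    then have "card V \<le> Suc (degree V E (hd zs))"
      using degree_universal_new degree_universal_old in_lists sub by auto
    moreover have "last ys \<noteq> hd zs" using distinct(1) in_lists by auto
    ultimately have "{hd zs, last ys} \<in> E"
      using adjacent_if_degree_maximal in_lists sub by auto
    then show ?thesis by (simp add: insert_commute)
  qed
  have "successively (\<lambda>a b. {a, b} \<in> E) (ys @ zs)"
    using successively_avoiding_universal[OF edges(1) distinct(2)]
      successively_avoiding_universal[OF edges(2) distinct(3)] junction
    by (auto simp: successively_append_iff)
  moreover have "sorted (map (degree V E) (ys @ zs))"
    using sorted sorted_degree_universal_iff[OF sub] by (simp add: sorted_append)
  ultimately show ?thesis
    using nonempty distinct sub unfolding degree_monotone_path_def is_path_iff_successively by auto
qed

lemma mp_universal_ge: "Suc (mp V E) \<le> mp (insert v V) EH"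
proof (cases "mp V E = 0")
  case True
  have "degree_monotone_path (insert v V) EH [v]"
    unfolding degree_monotone_path_def is_path_def by auto
  then show ?thesis using length_le_mp[of "insert v V" EH "[v]"] finite_vertices True by simp
next
  case False
  obtain xs where xs: "degree_monotone_path V E xs" "length xs = mp V E"
    using mp_attained[OF finite_vertices False] by blast
  obtain ys where ys: "degree_monotone_path V E ys" "sorted (map (degree V E) ys)"
    "length ys = length xs" by (rule degree_monotone_path_nondecreasing[OF xs(1)])
  have ys_path: "ys \<noteq> []" "distinct ys" "set ys \<subseteq> V" "successively (\<lambda>a b. {a, b} \<in> E) ys"
    using ys(1) unfolding degree_monotone_path_def is_path_iff_successively by auto
  have "last ys \<in> V" using ys_path(1,3) by auto
  then have "{v, last ys} \<in> EH" by blast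
  then have "{last ys, v} \<in> EH" by (simp add: insert_commute)
  moreover have "successively (\<lambda>a b. {a, b} \<in> EH) ys"
    using ys_path(4) by (rule successively_mono) auto
  ultimately have "successively (\<lambda>a b. {a, b} \<in> EH) (ys @ [v])"
    using ys_path(1) by (simp add: successively_append_iff)
  moreover have "sorted (map (degree (insert v V) EH) (ys @ [v]))"
    using ys(2) ys_path(3) degree_less_card
    by (auto simp: sorted_append sorted_degree_universal_iff[OF ys_path(3)]
        degree_universal_old degree_universal_new Suc_le_eq)
  ultimately have "degree_monotone_path (insert v V) EH (ys @ [v])"
    using ys_path v_new unfolding degree_monotone_path_def is_path_iff_successively by auto
  then have "length (ys @ [v]) \<le> mp (insert v V) EH" using finite_vertices by (intro length_le_mp) auto
  then show ?thesis using ys(3) xs(2) by simp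
qed

lemma mp_universal_le: "mp (insert v V) EH \<le> Suc (mp V E)"
proof (rule mp_le)
  fix xs0 assume "degree_monotone_path (insert v V) EH xs0"
  then obtain xs where xs: "degree_monotone_path (insert v V) EH xs"
    "sorted (map (degree (insert v V) EH) xs)" "length xs = length xs0"
    by (rule degree_monotone_path_nondecreasing)
  show "length xs0 \<le> Suc (mp V E)"
  proof (cases "v \<in> set xs")
    case False
    then have "length xs \<le> mp V E"
      using xs degree_monotone_path_avoiding_universal length_le_mp[OF finite_vertices] by blast
    then show ?thesis using xs(3) by simp
  next
    case True
    then obtain ys zs where split: "xs = ys @ v # zs" by (meson split_list)
    show ?thesis
    proof (cases "ys @ zs = []")
      case True
      then show ?thesis using split xs(3) by simp
    next
      case False
      then have "length (ys @ zs) \<le> mp V E"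
        using xs split degree_monotone_path_cut_universal length_le_mp[OF finite_vertices] by blast
      then show ?thesis using split xs(3) by simp
    qed
  qed
qed

lemma mp_universal: "mp (insert v V) EH = Suc (mp V E)"
  using mp_universal_ge mp_universal_le by simp

end

lemma saturated_universal:
  assumes simple: "simple_graph V E" and sat: "saturated V E" and v_new: "v \<notin> V"
  shows "saturated (insert v V) (E \<union> {{v, u} | u. u \<in> V})"
  unfolding saturated_def
proof (intro ballI impI)
  fix u w assume "u \<in> insert v V" "w \<in> insert v V"
    and non_edge: "u \<noteq> w \<and> {u, w} \<notin> E \<union> {{v, u} | u. u \<in> V}"
  then have uw: "u \<in> V" "w \<in> V" by (auto simp: insert_commute)
  have simple_plus_edge: "simple_graph V (insert {u, w} E)"
    using simple uw non_edge unfolding simple_graph_def by auto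
  have "insert {u, w} (E \<union> {{v, u} | u. u \<in> V}) =
      insert {u, w} E \<union> {{v, u} | u. u \<in> V}" by auto
  then have "mp (insert v V) (insert {u, w} (E \<union> {{v, u} | u. u \<in> V}))
      = Suc (mp V (insert {u, w} E))"
    using mp_universal[OF simple_plus_edge v_new] by simp
  moreover have "mp V (insert {u, w} E) > mp V E"
    using sat uw non_edge unfolding saturated_def by auto
  ultimately show "mp (insert v V) (insert {u, w} (E \<union> {{v, u} | u. u \<in> V}))
      > mp (insert v V) (E \<union> {{v, u} | u. u \<in> V})"
    using mp_universal[OF simple v_new] by simp
qed

theorem lemma2p6:
  fixes V :: "'a set" and E :: "'a set set" and v :: 'a and k :: nat
  assumes "simple_graph V E"
    and "saturated V E"
    and "mp V E = k"
    and "v \<notin> V"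
  shows "mp (fst (add_universal_vertex V E v)) (snd (add_universal_vertex V E v)) = k + 1
       \<and> saturated (fst (add_universal_vertex V E v)) (snd (add_universal_vertex V E v))"
  using mp_universal[OF assms(1,4)] saturated_universal[OF assms(1,2,4)] assms(3)
  unfolding add_universal_vertex_def by simp

end
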